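(* Let $k$ be a positive integer and let $G$ be a $3$-graph with $\lambda(G)>\lambda(K_{k+1}^3)$, and let $\vec x$ be an optimal weight vector of $G$. Then every vertex $v\in V(G)$ whose link graph satisfies $\omega(G_v)\leq k$ has weight $x_v<\frac{1}{k+1}$.
   Context: For a $3$-graph $G$ on vertex set $[n]$ and $\vec x\in\Delta=\{\vec x\in[0,1]^n:\sum_i x_i=1\}$, put $\lambda(G,\vec x)=\sum_{e\in E(G)}\prod_{i\in e}x_i$ and $\lambda(G)=\max_{\vec x\in\Delta}\lambda(G,\vec x)$ (the Lagrangian). A vector $\vec x\in\Delta$ with $\lambda(G,\vec x)=\lambda(G)$ is an optimal weight vector, and $x_v$ is the weight of vertex $v$. The link graph of $v$ is the $2$-graph $G_v=\{ab: vab\in E(G)\}$, and $\omega(\cdot)$ denotes the order of a maximum clique of a $2$-graph. $K_m^3$ is the complete $3$-graph on $m$ vertices. *)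

theory Defs
  imports Complex_Main
begin

definition is_3graph :: "nat \<Rightarrow> nat set set \<Rightarrow> bool" where
  "is_3graph n E \<longleftrightarrow> (\<forall>e\<in>E. e \<subseteq> {1..n} \<and> card e = 3)"

definition simplex :: "nat \<Rightarrow> (nat \<Rightarrow> real) set" where
  "simplex n = {x. (\<forall>i\<in>{1..n}. 0 \<le> x i \<and> x i \<le> 1) \<and> (\<Sum>i\<in>{1..n}. x i) = 1}"

definition lam :: "nat set set \<Rightarrow> (nat \<Rightarrow> real) \<Rightarrow> real" where
  "lam E x = (\<Sum>e\<in>E. \<Prod>i\<in>e. x i)"

definition lagrangian :: "nat \<Rightarrow> nat set set \<Rightarrow> real" where
  "lagrangian n E = Sup (lam E ` simplex n)"

definition optimal_weight :: "nat \<Rightarrow> nat set set \<Rightarrow> (nat \<Rightarrow> real) \<Rightarrow> bool" where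
  "optimal_weight n E x \<longleftrightarrow> x \<in> simplex n \<and> lam E x = lagrangian n E"

definition complete3 :: "nat \<Rightarrow> nat set set" where
  "complete3 m = {e. e \<subseteq> {1..m} \<and> card e = 3}"

definition link :: "nat set set \<Rightarrow> nat \<Rightarrow> nat set set" where
  "link E v = {{a, b} | a b. {v, a, b} \<in> E}"

definition is_clique :: "nat set set \<Rightarrow> nat set \<Rightarrow> bool" where
  "is_clique L S \<longleftrightarrow> (\<forall>a\<in>S. \<forall>b\<in>S. a \<noteq> b \<longrightarrow> {a, b} \<in> L)"

definition clique_number :: "nat \<Rightarrow> nat set set \<Rightarrow> nat" where
  "clique_number n L = Max {card S | S. S \<subseteq> {1..n} \<and> is_clique L S}"

end

(*
  At an optimal weight vector x, the vector y = c x - (c - 1) e_v stays in the simplex for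
  c slightly above 1.  The Lagrangian is homogeneous of degree 3 and affine in the weight of v
  with slope lambda(G_v, x), so lambda(G, y) = c^3 lambda(G) - (c - 1) c^2 lambda(G_v, x),
  and lambda(G, y) <= lambda(G) gives 3 lambda(G) <= lambda(G_v, x) as c decreases to 1.
  Since omega(G_v) <= k, the Motzkin--Straus bound gives
  lambda(G_v, x) <= (1 - 1/k)/2 (1 - x_v)^2.  If x_v >= 1/(k + 1), the right-hand side is at
  most k (k - 1) / (2 (k + 1)^2), which is 3 times the value of K_{k+1}^3 at the uniform
  weighting, contradicting lambda(G) > lambda(K_{k+1}^3).
*)

theory Submission
  imports Defs "HOL-Analysis.Convex"
begin

lemma prod_fun_upd:
  assumes "finite e"
  shows "prod (y(i := a)) e = (if i \<in> e then a * prod y (e - {i}) else prod y e)"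
  using assms by (auto simp: prod.remove intro!: prod.cong)

lemma prod_transfer_weight:
  fixes y :: "'a \<Rightarrow> 'b::comm_ring_1"
  assumes "finite e" "\<not> {i, j} \<subseteq> e"
  shows "prod (y(i := y i + t, j := y j - t)) e
    = prod y e + t * ((if i \<in> e then prod y (e - {i}) else 0) - (if j \<in> e then prod y (e - {j}) else 0))"
  using assms by (simp add: prod_fun_upd prod.remove del: fun_upd_apply) (auto simp: algebra_simps)

lemma real_choose_3: "real (m choose 3) = real m * (real m - 1) * (real m - 2) / 6"
  by (simp add: binomial_gbinomial gbinomial_prod_rev numeral_3_eq_3 fact_numeral
      prod.atLeast0_lessThan_Suc)

lemma simplex_iff: "y \<in> simplex n \<longleftrightarrow> (\<forall>i\<in>{1..n}. 0 \<le> y i) \<and> (\<Sum>i\<in>{1..n}. y i) = 1"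
proof -
  have "y i \<le> 1" if "\<forall>i\<in>{1..n}. 0 \<le> y i" "(\<Sum>i\<in>{1..n}. y i) = 1" "i \<in> {1..n}" for i
    using member_le_sum[of i "{1..n}" y] that by auto
  then show ?thesis
    unfolding simplex_def by blast
qed

lemma lam_scale:
  assumes "\<forall>e\<in>L. card e = m"
  shows "lam L (\<lambda>i. c * y i) = c ^ m * lam L y"
  using assms unfolding lam_def by (simp add: prod.distrib sum_distrib_left)

lemma lam_transfer_weight:
  fixes y :: "nat \<Rightarrow> real"
  assumes "\<forall>e\<in>L. finite e \<and> \<not> {i, j} \<subseteq> e"
  shows "lam L (y(i := y i + t, j := y j - t))
    = lam L y + t * (\<Sum>e\<in>L. (if i \<in> e then prod y (e - {i}) else 0)
                              - (if j \<in> e then prod y (e - {j}) else 0))"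
  using assms unfolding lam_def
  by (simp add: prod_transfer_weight sum.distrib sum_distrib_left del: fun_upd_apply)

lemma finite_3graph: "is_3graph n E \<Longrightarrow> finite E"
  unfolding is_3graph_def by (meson Pow_iff finite_Pow_iff finite_atLeastAtMost finite_subset subsetI)

lemma lam_le_lagrangian:
  assumes G: "is_3graph n E" and y: "y \<in> simplex n"
  shows "lam E y \<le> lagrangian n E"
  unfolding lagrangian_def
proof (rule cSup_upper)
  show "lam E y \<in> lam E ` simplex n" using y by simp
  have "lam E z \<le> card E" if "z \<in> simplex n" for z
  proof -
    have "prod z e \<le> 1" if "e \<in> E" for e
      using \<open>z \<in> simplex n\<close> G that unfolding simplex_def is_3graph_def
      by (intro prod_le_1) auto
    then show ?thesis
      unfolding lam_def using sum_bounded_above[of E "\<lambda>e. prod z e" 1] by simp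
  qed
  then show "bdd_above (lam E ` simplex n)"
    by (rule bdd_aboveI2)
qed

lemma lagrangian_complete3_ge:
  assumes "m \<ge> 1"
  shows "(real m - 1) * (real m - 2) / (6 * real m ^ 2) \<le> lagrangian m (complete3 m)"
proof -
  have G: "is_3graph m (complete3 m)"
    unfolding is_3graph_def complete3_def by auto
  have uniform: "(\<lambda>_. 1 / real m) \<in> simplex m"
    using assms by (simp add: simplex_iff)
  have "card (complete3 m) = m choose 3"
    unfolding complete3_def by (subst n_subsets) auto
  then have "lam (complete3 m) (\<lambda>_. 1 / real m) = real (m choose 3) / real m ^ 3"
    unfolding lam_def complete3_def by (simp add: power_one_over)
  also have "\<dots> = (real m - 1) * (real m - 2) / (6 * real m ^ 2)"
    using assms by (simp add: real_choose_3 power2_eq_square power3_eq_cube)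
  finally show ?thesis
    using lam_le_lagrangian[OF G uniform] by simp
qed

section \<open>The Motzkin--Straus bound\<close>

lemma lam_2graph_double_sum:
  assumes V: "finite V" and L: "\<forall>e\<in>L. e \<subseteq> V \<and> card e = 2"
  shows "2 * lam L y = (\<Sum>a\<in>V. \<Sum>b\<in>V. if {a, b} \<in> L then y a * y b else 0)"
proof -
  define P where "P = {p\<in>V \<times> V. {fst p, snd p} \<in> L}"
  have "finite P" "finite L"
    using V L unfolding P_def by (auto intro: finite_subset[of L "Pow V"])
  have "(\<Sum>a\<in>V. \<Sum>b\<in>V. if {a, b} \<in> L then y a * y b else 0)
      = (\<Sum>p\<in>V \<times> V. if {fst p, snd p} \<in> L then y (fst p) * y (snd p) else 0)"
    by (simp add: sum.cartesian_product case_prod_beta)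
  also have "\<dots> = (\<Sum>p\<in>P. y (fst p) * y (snd p))"
    unfolding P_def using V by (simp add: sum.inter_filter[symmetric])
  also have "\<dots> = (\<Sum>e\<in>L. \<Sum>p\<in>{p\<in>P. {fst p, snd p} = e}. y (fst p) * y (snd p))"
    using \<open>finite P\<close> \<open>finite L\<close> by (intro sum.group[symmetric]) (auto simp: P_def)
  also have "\<dots> = (\<Sum>e\<in>L. 2 * prod y e)"
  proof (rule sum.cong[OF refl])
    fix e assume e: "e \<in> L"
    then obtain a b where ab: "e = {a, b}" "a \<noteq> b"
      using L card_2_iff by metis
    then have "{p\<in>P. {fst p, snd p} = e} = {(a, b), (b, a)}"
      using e L unfolding P_def by (auto simp: doubleton_eq_iff insert_commute)
    then show "(\<Sum>p\<in>{p\<in>P. {fst p, snd p} = e}. y (fst p) * y (snd p)) = 2 * prod y e"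
      using ab by simp
  qed
  finally show ?thesis
    by (simp add: lam_def sum_distrib_left)
qed

lemma lam_2graph_le_support_card:
  assumes V: "finite V" and L: "\<forall>e\<in>L. e \<subseteq> V \<and> card e = 2"
    and nonneg: "\<forall>i\<in>V. 0 \<le> y i" and supp: "card {i\<in>V. y i \<noteq> 0} \<le> k"
  shows "lam L y \<le> (1 - 1 / k) / 2 * (\<Sum>i\<in>V. y i)\<^sup>2"
proof -
  define T where "T = {i\<in>V. y i \<noteq> 0}"
  define S where "S = (\<Sum>i\<in>T. y i)"
  have T: "finite T" "T \<subseteq> V"
    using V unfolding T_def by auto
  have sum_V: "(\<Sum>i\<in>V. y i) = S"
    unfolding S_def by (rule sum.mono_neutral_right[OF V T(2)]) (auto simp: T_def)
  have "2 * lam L y = (\<Sum>a\<in>T. \<Sum>b\<in>V. if {a, b} \<in> L then y a * y b else 0)"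
    unfolding lam_2graph_double_sum[OF V L]
    by (rule sum.mono_neutral_right[OF V T(2)]) (auto simp: T_def intro!: sum.neutral split: if_splits)
  also have "\<dots> = (\<Sum>a\<in>T. \<Sum>b\<in>T. if {a, b} \<in> L then y a * y b else 0)"
    by (intro sum.cong refl sum.mono_neutral_right[OF V T(2)]) (auto simp: T_def)
  also have "\<dots> \<le> (\<Sum>a\<in>T. \<Sum>b\<in>T. y a * y b - (if a = b then y a * y b else 0))"
    using L nonneg T by (intro sum_mono) (auto intro: mult_nonneg_nonneg)
  also have "\<dots> = S\<^sup>2 - (\<Sum>a\<in>T. (y a)\<^sup>2)"
    by (simp add: sum_subtractf T S_def power2_eq_square sum_product)
  finally have double: "2 * lam L y \<le> S\<^sup>2 - (\<Sum>a\<in>T. (y a)\<^sup>2)" .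
  show ?thesis
  proof (cases "T = {}")
    case True
    then show ?thesis using double sum_V S_def by simp
  next
    case False
    then have "0 < card T" "card T \<le> k"
      using T supp unfolding T_def by (auto simp: card_gt_0_iff)
    then have "S\<^sup>2 / k \<le> S\<^sup>2 / card T"
      by (intro divide_left_mono) auto
    also have "\<dots> \<le> (\<Sum>a\<in>T. (y a)\<^sup>2)"
      using sum_squared_le_sum_of_squares[of y T] \<open>0 < card T\<close>
      unfolding S_def by (simp add: divide_le_eq)
    finally show ?thesis
      using double sum_V by (simp add: algebra_simps)
  qed
qed

lemma lam_2graph_support_reduction:
  assumes V: "finite V" and L: "\<forall>e\<in>L. card e = 2" and nonneg: "\<forall>l\<in>V. 0 \<le> y l"
    and ij: "i \<in> V" "j \<in> V" "i \<noteq> j" "y i \<noteq> 0" "y j \<noteq> 0" "{i, j} \<notin> L"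
  obtains z where "\<forall>l\<in>V. 0 \<le> z l" "(\<Sum>l\<in>V. z l) = (\<Sum>l\<in>V. y l)"
    "lam L y \<le> lam L z" "{l\<in>V. z l \<noteq> 0} \<subset> {l\<in>V. y l \<noteq> 0}"
proof -
  define C where "C = (\<Sum>e\<in>L. (if i \<in> e then prod y (e - {i}) else 0)
                              - (if j \<in> e then prod y (e - {j}) else 0))"
  \<comment> \<open>Along \<open>y + t (e\<^sub>i - e\<^sub>j)\<close> the Lagrangian is affine with slope \<open>C\<close>,
    so moving all of the weight of one of \<open>i\<close>, \<open>j\<close> onto the other does not decrease it.\<close>
  define t where "t = (if C \<ge> 0 then y j else - y i)"
  define z where "z = y(i := y i + t, j := y j - t)"
  have "\<forall>e\<in>L. finite e \<and> \<not> {i, j} \<subseteq> e"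
    using L ij by (metis card.infinite card_2_iff card_subset_eq zero_neq_numeral)
  then have "lam L z = lam L y + t * C"
    unfolding z_def C_def by (rule lam_transfer_weight)
  moreover have "t * C \<ge> 0"
    using nonneg ij unfolding t_def by (auto simp: mult_nonneg_nonpos)
  moreover have "\<forall>l\<in>V. 0 \<le> z l"
    using nonneg ij unfolding z_def t_def by auto
  moreover have "(\<Sum>l\<in>V. z l) = (\<Sum>l\<in>V. y l + (if l = i then t else 0) - (if l = j then t else 0))"
    using ij unfolding z_def by (intro sum.cong) auto
  then have "(\<Sum>l\<in>V. z l) = (\<Sum>l\<in>V. y l)"
    using V ij by (simp add: sum.distrib sum_subtractf)
  moreover have "{l\<in>V. z l \<noteq> 0} \<subset> {l\<in>V. y l \<noteq> 0}"
    using ij unfolding z_def t_def by auto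
  ultimately show ?thesis
    using that by simp
qed

theorem motzkin_straus_upper_bound:
  assumes V: "finite V" and L: "\<forall>e\<in>L. e \<subseteq> V \<and> card e = 2"
    and clique: "\<forall>S\<subseteq>V. is_clique L S \<longrightarrow> card S \<le> k" and nonneg: "\<forall>i\<in>V. 0 \<le> y i"
  shows "lam L y \<le> (1 - 1 / k) / 2 * (\<Sum>i\<in>V. y i)\<^sup>2"
  using nonneg
proof (induction "card {i\<in>V. y i \<noteq> 0}" arbitrary: y rule: less_induct)
  case less
  show ?case
  proof (cases "is_clique L {i\<in>V. y i \<noteq> 0}")
    case True
    then show ?thesis
      using clique lam_2graph_le_support_card[OF V L less.prems] by auto
  next
    case False
    then obtain i j where ij: "i \<in> V" "j \<in> V" "i \<noteq> j" "y i \<noteq> 0" "y j \<noteq> 0" "{i, j} \<notin> L"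
      unfolding is_clique_def by auto
    have "\<forall>e\<in>L. card e = 2"
      using L by simp
    then obtain z where z: "\<forall>l\<in>V. 0 \<le> z l" "(\<Sum>l\<in>V. z l) = (\<Sum>l\<in>V. y l)"
      "lam L y \<le> lam L z" "{l\<in>V. z l \<noteq> 0} \<subset> {l\<in>V. y l \<noteq> 0}"
      using lam_2graph_support_reduction[OF V _ less.prems ij] by blast
    have "card {l\<in>V. z l \<noteq> 0} < card {l\<in>V. y l \<noteq> 0}"
      using V z(4) by (intro psubset_card_mono) auto
    from less.hyps[OF this z(1)] z(2,3) show ?thesis
      by simp
  qed
qed

section \<open>Links and optimal weights\<close>

lemma link_edgeE:
  assumes "f \<in> link E v" "is_3graph n E"
  obtains a b where "f = {a, b}" "{v, a, b} \<in> E" "v \<noteq> a" "v \<noteq> b" "a \<noteq> b"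
proof -
  obtain a b where ab: "f = {a, b}" "{v, a, b} \<in> E"
    using assms(1) unfolding link_def by auto
  then have "card {v, a, b} = 3"
    using assms(2) unfolding is_3graph_def by auto
  then have "v \<noteq> a \<and> v \<noteq> b \<and> a \<noteq> b"
    by (auto simp: card_insert_if split: if_splits)
  with ab that show ?thesis by blast
qed

lemma link_edge_subset: "f \<in> link E v \<Longrightarrow> is_3graph n E \<Longrightarrow> f \<subseteq> {1..n} - {v}"
  by (erule link_edgeE) (auto simp: is_3graph_def)

lemma card_link_edge: "f \<in> link E v \<Longrightarrow> is_3graph n E \<Longrightarrow> card f = 2"
  by (erule link_edgeE) auto

lemma link_eq_image:
  assumes "is_3graph n E"
  shows "link E v = (\<lambda>e. e - {v}) ` {e\<in>E. v \<in> e}"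
proof (intro equalityI subsetI)
  fix f assume "f \<in> link E v"
  then obtain a b where "f = {a, b}" "{v, a, b} \<in> E" "v \<noteq> a" "v \<noteq> b"
    using assms by (rule link_edgeE)
  then show "f \<in> (\<lambda>e. e - {v}) ` {e\<in>E. v \<in> e}"
    by (intro image_eqI[of _ _ "{v, a, b}"]) auto
next
  fix f assume "f \<in> (\<lambda>e. e - {v}) ` {e\<in>E. v \<in> e}"
  then obtain e where e: "e \<in> E" "v \<in> e" "f = e - {v}" by auto
  then have "card f = 2"
    using assms by (simp add: is_3graph_def card_Diff_singleton_if)
  then obtain a b where "f = {a, b}"
    by (meson card_2_iff)
  with e have "{v, a, b} \<in> E" by (metis insert_Diff)
  with \<open>f = {a, b}\<close> show "f \<in> link E v"
    unfolding link_def by auto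
qed

lemma lam_split_vertex:
  assumes G: "is_3graph n E"
  shows "lam E y = lam {e\<in>E. v \<notin> e} y + y v * lam (link E v) y"
proof -
  have fin: "finite E" "\<forall>e\<in>E. finite e"
    using finite_3graph[OF G] G unfolding is_3graph_def by (auto intro: card_ge_0_finite)
  have "lam E y = lam {e\<in>E. v \<notin> e} y + (\<Sum>e\<in>{e\<in>E. v \<in> e}. prod y e)"
    unfolding lam_def using fin by (subst sum.union_disjoint[symmetric]) (auto intro: sum.cong)
  also have "(\<Sum>e\<in>{e\<in>E. v \<in> e}. prod y e) = y v * (\<Sum>e\<in>{e\<in>E. v \<in> e}. prod y (e - {v}))"
    using fin by (auto simp: sum_distrib_left prod.remove intro!: sum.cong)
  also have "(\<Sum>e\<in>{e\<in>E. v \<in> e}. prod y (e - {v})) = lam (link E v) y"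
    unfolding link_eq_image[OF G] lam_def
    by (subst sum.reindex) (auto intro!: inj_onI simp: insert_Diff[symmetric])
  finally show ?thesis .
qed

lemma lam_fun_upd:
  assumes G: "is_3graph n E"
  shows "lam E (y(v := a)) = lam E y + (a - y v) * lam (link E v) y"
proof -
  have "lam {e\<in>E. v \<notin> e} (y(v := a)) = lam {e\<in>E. v \<notin> e} y"
    unfolding lam_def by (intro sum.cong prod.cong) auto
  moreover have "lam (link E v) (y(v := a)) = lam (link E v) y"
    unfolding lam_def using link_edge_subset[OF _ G] by (intro sum.cong prod.cong) auto
  ultimately show ?thesis
    using lam_split_vertex[OF G, of "y(v := a)" v] lam_split_vertex[OF G, of y v]
    by (simp add: algebra_simps)
qed

lemma rescale_away_from_vertex_in_simplex:
  assumes x: "x \<in> simplex n" and v: "v \<in> {1..n}" and c: "1 \<le> c" "c \<le> 1 + x v"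
  shows "(\<lambda>i. c * x i)(v := c * x v - (c - 1)) \<in> simplex n"
proof -
  have "x v \<le> 1"
    using x v by (simp add: simplex_def)
  then have "c * (1 - x v) \<le> (1 + x v) * (1 - x v)"
    using c by (intro mult_right_mono) auto
  also have "\<dots> \<le> 1"
    by (simp add: algebra_simps)
  finally have "0 \<le> c * x v - (c - 1)"
    by (simp add: algebra_simps)
  moreover have "(\<Sum>i\<in>{1..n}. ((\<lambda>i. c * x i)(v := c * x v - (c - 1))) i)
      = c * (\<Sum>i\<in>{1..n}. x i) - (c - 1)"
    using v by (simp add: sum.remove sum_distrib_left algebra_simps)
  ultimately show ?thesis
    using x c by (simp add: simplex_iff)
qed

lemma lam_rescale_away_from_vertex:
  assumes G: "is_3graph n E"
  shows "lam E ((\<lambda>i. c * x i)(v := c * x v - (c - 1)))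
    = c ^ 3 * lam E x - (c - 1) * c\<^sup>2 * lam (link E v) x"
  unfolding lam_fun_upd[OF G]
  using lam_scale[of E 3] lam_scale[of "link E v" 2] card_link_edge[OF _ G] G
  by (simp add: is_3graph_def algebra_simps)

lemma optimal_weight_link_ge:
  assumes G: "is_3graph n E" and opt: "optimal_weight n E x"
    and v: "v \<in> {1..n}" and pos: "x v > 0"
  shows "3 * lagrangian n E \<le> lam (link E v) x"
proof -
  define \<Lambda> where "\<Lambda> = lagrangian n E"
  define D where "D = lam (link E v) x"
  have x: "x \<in> simplex n" "lam E x = \<Lambda>"
    using opt unfolding optimal_weight_def \<Lambda>_def by auto
  have "(c\<^sup>2 + c + 1) * \<Lambda> - c\<^sup>2 * D \<le> 0" if c: "1 < c" "c < 1 + x v" for c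
  proof -
    have "c ^ 3 * \<Lambda> - (c - 1) * c\<^sup>2 * D \<le> \<Lambda>"
      using lam_le_lagrangian[OF G rescale_away_from_vertex_in_simplex[OF x(1) v, of c]] c
      unfolding lam_rescale_away_from_vertex[OF G] x(2) D_def \<Lambda>_def by simp
    then have "(c - 1) * ((c\<^sup>2 + c + 1) * \<Lambda> - c\<^sup>2 * D) \<le> 0"
      by (simp add: algebra_simps power2_eq_square power3_eq_cube)
    with c show ?thesis
      by (simp add: mult_le_0_iff)
  qed
  then have "\<forall>\<^sub>F c in at_right 1. (c\<^sup>2 + c + 1) * \<Lambda> - c\<^sup>2 * D \<le> 0"
    unfolding eventually_at_right_field using pos by (intro exI[of _ "1 + x v"]) auto
  moreover have "((\<lambda>c. (c\<^sup>2 + c + 1) * \<Lambda> - c\<^sup>2 * D)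
      \<longlongrightarrow> (1\<^sup>2 + 1 + 1) * \<Lambda> - 1\<^sup>2 * D) (at_right 1)"
    by (intro tendsto_intros)
  ultimately have "(1\<^sup>2 + 1 + 1) * \<Lambda> - 1\<^sup>2 * D \<le> 0"
    by (intro tendsto_upperbound) auto
  then show ?thesis
    unfolding \<Lambda>_def D_def by simp
qed

lemma card_le_clique_number:
  assumes "S \<subseteq> {1..n}" "is_clique L S"
  shows "card S \<le> clique_number n L"
proof -
  have "{card S | S. S \<subseteq> {1..n} \<and> is_clique L S} \<subseteq> card ` Pow {1..n}"
    by auto
  then show ?thesis
    unfolding clique_number_def using assms by (intro Max_ge) (auto intro: finite_subset)
qed

lemma lam_link_le:
  assumes G: "is_3graph n E" and v: "v \<in> {1..n}" and x: "x \<in> simplex n"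
    and clique: "clique_number n (link E v) \<le> k"
  shows "lam (link E v) x \<le> (1 - 1 / k) / 2 * (1 - x v)\<^sup>2"
proof -
  have "lam (link E v) x \<le> (1 - 1 / k) / 2 * (\<Sum>i\<in>{1..n} - {v}. x i)\<^sup>2"
  proof (rule motzkin_straus_upper_bound)
    show "\<forall>e\<in>link E v. e \<subseteq> {1..n} - {v} \<and> card e = 2"
      using link_edge_subset[OF _ G] card_link_edge[OF _ G] by blast
    show "\<forall>S\<subseteq>{1..n} - {v}. is_clique (link E v) S \<longrightarrow> card S \<le> k"
      using card_le_clique_number clique by (meson Diff_subset order.trans)
    show "\<forall>i\<in>{1..n} - {v}. 0 \<le> x i"
      using x by (simp add: simplex_iff)
  qed simp
  moreover have "(\<Sum>i\<in>{1..n} - {v}. x i) = 1 - x v"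
    using x v by (simp add: simplex_iff sum.remove)
  ultimately show ?thesis
    by simp
qed

theorem claim3p2:
  fixes n k :: nat and E :: "nat set set" and x :: "nat \<Rightarrow> real" and v :: nat
  assumes "k \<ge> 1"
    and "is_3graph n E"
    and "lagrangian n E > lagrangian (k + 1) (complete3 (k + 1))"
    and "optimal_weight n E x"
    and "v \<in> {1..n}"
    and "clique_number n (link E v) \<le> k"
  shows "x v < 1 / (real k + 1)"
proof (rule ccontr)
  assume "\<not> x v < 1 / (real k + 1)"
  then have heavy: "k / (k + 1) \<ge> 1 - x v" "x v > 0"
    by (auto simp: field_simps not_less intro: less_le_trans[of 0 "1 / (real k + 1)"])
  have x: "x \<in> simplex n"
    using assms(4) by (simp add: optimal_weight_def)
  then have "x v \<le> 1"
    using assms(5) by (simp add: simplex_def)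
  have "3 * lagrangian n E \<le> lam (link E v) x"
    using optimal_weight_link_ge assms(2,4,5) heavy(2) .
  also have "\<dots> \<le> (1 - 1 / k) / 2 * (1 - x v)\<^sup>2"
    using assms(2,5) x assms(6) by (rule lam_link_le)
  also have "\<dots> \<le> (1 - 1 / k) / 2 * (k / (k + 1))\<^sup>2"
    using heavy \<open>x v \<le> 1\<close> \<open>k \<ge> 1\<close> by (intro mult_left_mono power_mono) auto
  also have "\<dots> = 3 * ((real (k + 1) - 1) * (real (k + 1) - 2) / (6 * real (k + 1) ^ 2))"
    using \<open>k \<ge> 1\<close> by (simp add: divide_simps power2_eq_square)
  also have "\<dots> \<le> 3 * lagrangian (k + 1) (complete3 (k + 1))"
    using lagrangian_complete3_ge[of "k + 1"] by simp
  finally show False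
    using assms(3) by simp
qed

end
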